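(* Let $\mathcal{W}=\mathcal{W}^{(1)}+\cdots+\mathcal{W}^{(K)}$ be a decomposition of a tensor $\mathcal{W}\in\mathbb{R}^{n_1\times\cdots\times n_K}$, and let $\bar r_k=\mathrm{rank}(\boldsymbol{W}^{(k)}_{(k)})$. This decomposition is locally identifiable if and only if there exists $k^\ast$ such that $\mathcal{W}^{(k^\ast)}=\mathcal{W}$ and $\mathcal{W}^{(k)}=0$ for all $k\ne k^\ast$.
   Context: $N=\prod_k n_k$; for a tensor $\mathcal{W}^{(k)}$, $\boldsymbol{W}^{(k)}_{(k)}\in\mathbb{R}^{n_k\times N/n_k}$ is its mode-$k$ unfolding (columns are its mode-$k$ fibers). A decomposition $\mathcal{W}=\sum_{k=1}^K\mathcal{W}^{(k)}$ with $\bar r_k=\mathrm{rank}(\boldsymbol{W}^{(k)}_{(k)})$ is called locally identifiable if there is no other decomposition $\mathcal{W}=\sum_{k=1}^K\tilde{\mathcal{W}}^{(k)}$ (with $(\tilde{\mathcal{W}}^{(k)})_k\ne(\mathcal{W}^{(k)})_k$) having the same ranks, i.e. $\mathrm{rank}(\tilde{\boldsymbol{W}}^{(k)}_{(k)})=\bar r_k$ for all $k$. *)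

theory Defs
  imports "Jordan_Normal_Form.DL_Rank" "HOL-Library.List_Lexorder"
begin

text \<open>A real tensor of order K = length n with dimensions n!0, ..., n!(K-1) is represented
  as a function from index lists to reals that vanishes outside the valid index range.
  Modes are numbered 0..K-1.\<close>

definition tensor_idx :: "nat list \<Rightarrow> nat list set" where
  "tensor_idx n = {is. length is = length n \<and> (\<forall>l<length n. is ! l < n ! l)}"

definition tensor_on :: "nat list \<Rightarrow> (nat list \<Rightarrow> real) \<Rightarrow> bool" where
  "tensor_on n T \<longleftrightarrow> (\<forall>is. is \<notin> tensor_idx n \<longrightarrow> T is = 0)"

text \<open>Column indices of the mode-k unfolding: the multi-indices over all modes other
  than k (the k-th entry is set to the dummy value 0).\<close>
definition unf_cols :: "nat list \<Rightarrow> nat \<Rightarrow> nat list set" where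
  "unf_cols n k = {j. length j = length n \<and> j ! k = 0 \<and>
                      (\<forall>l<length n. l \<noteq> k \<longrightarrow> j ! l < n ! l)}"

definition fiber :: "nat list \<Rightarrow> nat \<Rightarrow> (nat list \<Rightarrow> real) \<Rightarrow> nat list \<Rightarrow> real vec" where
  "fiber n k T j = vec (n ! k) (\<lambda>i. T (j[k := i]))"

definition mode_unfolding :: "nat list \<Rightarrow> nat \<Rightarrow> (nat list \<Rightarrow> real) \<Rightarrow> real mat" where
  "mode_unfolding n k T = mat_of_cols (n ! k) (map (fiber n k T) (sorted_list_of_set (unf_cols n k)))"

definition mode_rank :: "nat list \<Rightarrow> nat \<Rightarrow> (nat list \<Rightarrow> real) \<Rightarrow> nat" where
  "mode_rank n k T = vec_space.rank (n ! k) (mode_unfolding n k T)"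

definition tsum :: "(nat list \<Rightarrow> real) list \<Rightarrow> nat list \<Rightarrow> real" where
  "tsum Ws = (\<lambda>is. \<Sum>k<length Ws. (Ws ! k) is)"

text \<open>A decomposition Ws (list of K tensors, component k for mode k) is locally identifiable
  if no other decomposition of the same tensor has the same mode ranks.\<close>
definition locally_identifiable :: "nat list \<Rightarrow> (nat list \<Rightarrow> real) list \<Rightarrow> bool" where
  "locally_identifiable n Ws \<longleftrightarrow>
     (\<forall>Vs. length Vs = length n \<and> (\<forall>k<length n. tensor_on n (Vs ! k)) \<and>
           tsum Vs = tsum Ws \<and>
           (\<forall>k<length n. mode_rank n k (Vs ! k) = mode_rank n k (Ws ! k))
           \<longrightarrow> Vs = Ws)"

end

theory Submission imports Defs begin

text \<open>Suppose two components \<open>W\<^sub>i\<close>, \<open>W\<^sub>j\<close> with \<open>i \<noteq> j\<close> are nonzero. Take a nonzero mode-\<open>i\<close>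
  fiber \<open>p\<close> of \<open>W\<^sub>i\<close>, a nonzero mode-\<open>j\<close> fiber \<open>q\<close> of \<open>W\<^sub>j\<close>, and the tensor \<open>X(x) = p(x\<^sub>i) q(x\<^sub>j)\<close>.
  Every mode-\<open>i\<close> fiber of \<open>X\<close> is a multiple of \<open>p\<close>, which is a column of the mode-\<open>i\<close>
  unfolding of \<open>W\<^sub>i\<close>; so passing from \<open>W\<^sub>i\<close> to \<open>W\<^sub>i + t X\<close> adds a multiple of that column to
  every column, which for small \<open>t\<close> is an invertible column operation and keeps the rank.
  Symmetrically \<open>W\<^sub>j - t X\<close> has the mode-\<open>j\<close> rank of \<open>W\<^sub>j\<close>, so the decomposition is not locally
  identifiable. Conversely, a component of mode rank 0 vanishes, so a decomposition concentrated
  in a single component is the only one with its ranks.\<close>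

lemma (in vec_space) lin_indpt_singleton:
  assumes "v \<in> carrier_vec n" "v \<noteq> 0\<^sub>v n"
  shows "lin_indpt {v}"
proof (rule finite_lin_indpt2)
  fix a assume "lincomb a {v} = 0\<^sub>v n"
  hence av: "a v \<cdot>\<^sub>v v = 0\<^sub>v n" using assms unfolding lincomb_def by simp
  obtain i where i: "i < n" "v $ i \<noteq> 0"
    using assms by (metis eq_vecI carrier_vecD index_zero_vec)
  have "a v * v $ i = 0" using arg_cong[OF av, of "\<lambda>u. u $ i"] i assms(1) by simp
  thus "\<forall>w\<in>{v}. a w = 0" using i by simp
qed (use assms in auto)

lemma (in vec_space) rank_mat_of_cols_pos:
  assumes "set cs \<subseteq> carrier_vec n" "v \<in> set cs" "v \<noteq> 0\<^sub>v n"
  shows "0 < rank (mat_of_cols n cs)"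
proof -
  have "card {v} \<le> rank (mat_of_cols n cs)"
    by (rule rank_ge_card_indpt[where nc = "length cs"])
       (use assms lin_indpt_singleton in auto)
  thus ?thesis by simp
qed

lemma (in vec_space) span_add_multiple_subset:
  assumes F: "\<And>c. c \<in> C \<Longrightarrow> F c \<in> carrier_vec n" and c0: "c0 \<in> C"
    and G: "\<And>c. c \<in> C \<Longrightarrow> G c = F c + w c \<cdot>\<^sub>v F c0"
  shows "span (G ` C) \<subseteq> span (F ` C)"
proof -
  have FC: "F ` C \<subseteq> carrier_vec n" using F by blast
  have "G ` C \<subseteq> span (F ` C)"
  proof
    fix x assume "x \<in> G ` C"
    then obtain c where c: "c \<in> C" "x = G c" by blast
    have "F c \<in> span (F ` C)" using c(1) FC in_own_span by blast
    moreover have "F c0 \<in> span (F ` C)" using c0 FC in_own_span by blast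
    ultimately show "x \<in> span (F ` C)"
      unfolding c(2) G[OF c(1)] using FC span_add1 smult_in_span by simp
  qed
  then show ?thesis by (rule span_subsetI[OF FC])
qed

lemma (in vec_space) span_add_multiple:
  assumes F: "\<And>c. c \<in> C \<Longrightarrow> F c \<in> carrier_vec n" and c0: "c0 \<in> C"
    and G: "\<And>c. c \<in> C \<Longrightarrow> G c = F c + w c \<cdot>\<^sub>v F c0"
    and nz: "1 + w c0 \<noteq> 0"
  shows "span (G ` C) = span (F ` C)"
proof
  show "span (G ` C) \<subseteq> span (F ` C)"
    by (rule span_add_multiple_subset[of C F c0 G w, OF F c0 G])
  have Gc: "G c \<in> carrier_vec n" if "c \<in> C" for c
    using G[OF that] F[OF that] F[OF c0] by simp
  \<comment> \<open>the inverse column operation: \<open>F c0 = G c0 / (1 + w c0)\<close>\<close>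
  have Finv: "F c = G c + (- w c / (1 + w c0)) \<cdot>\<^sub>v G c0" if "c \<in> C" for c
    by (rule eq_vecI)
       (use F[OF that] F[OF c0] nz in \<open>auto simp: G[OF that] G[OF c0] field_simps\<close>)
  show "span (F ` C) \<subseteq> span (G ` C)"
    by (rule span_add_multiple_subset[of C G c0 F, OF Gc c0 Finv])
qed

lemma (in vec_space) rank_mat_of_cols_add_multiple:
  assumes F: "\<And>c. c \<in> set cs \<Longrightarrow> F c \<in> carrier_vec n" and c0: "c0 \<in> set cs"
    and G: "\<And>c. c \<in> set cs \<Longrightarrow> G c = F c + w c \<cdot>\<^sub>v F c0"
    and nz: "1 + w c0 \<noteq> 0"
  shows "rank (mat_of_cols n (map G cs)) = rank (mat_of_cols n (map F cs))"
proof -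
  have "G c \<in> carrier_vec n" if "c \<in> set cs" for c
    using G[OF that] F[OF that] F[OF c0] by simp
  then have "set (map G cs) \<subseteq> carrier_vec n" "set (map F cs) \<subseteq> carrier_vec n"
    using F by auto
  then show ?thesis
    unfolding rank_def using span_add_multiple[of "set cs" F c0 G w, OF F c0 G nz] by simp
qed

lemma finite_unf_cols: "finite (unf_cols n k)"
proof (rule finite_subset)
  show "unf_cols n k \<subseteq> {j. set j \<subseteq> {..sum_list n} \<and> length j = length n}"
  proof (rule subsetI, rule CollectI, rule conjI)
    fix j assume j: "j \<in> unf_cols n k"
    show "set j \<subseteq> {..sum_list n}"
    proof (rule subsetI)
      fix x assume "x \<in> set j"
      then obtain l where l: "l < length n" "x = j ! l"
        using j by (auto simp: in_set_conv_nth unf_cols_def)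
      have "n ! l \<le> sum_list n" using l(1) by (intro elem_le_sum_list)
      moreover have "l \<noteq> k \<Longrightarrow> j ! l < n ! l" and "j ! k = 0"
        using j l(1) by (auto simp: unf_cols_def)
      ultimately show "x \<in> {..sum_list n}"
        using l(2) by (cases "l = k") auto
    qed
    show "length j = length n" using j by (simp add: unf_cols_def)
  qed
qed (intro finite_lists_length_eq finite_atMost)

lemma fiber_carrier [simp]: "fiber n k T c \<in> carrier_vec (n ! k)"
  by (simp add: fiber_def)

lemma fiber_index [simp]: "x < n ! k \<Longrightarrow> fiber n k T c $ x = T (c[k := x])"
  by (simp add: fiber_def)

lemma unf_cols_update_in_tensor_idx:
  "c \<in> unf_cols n k \<Longrightarrow> k < length n \<Longrightarrow> x < n ! k \<Longrightarrow> c[k := x] \<in> tensor_idx n"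
  by (auto simp: unf_cols_def tensor_idx_def nth_list_update)

lemma tensor_idx_update_in_unf_cols:
  "x \<in> tensor_idx n \<Longrightarrow> k < length n \<Longrightarrow> x[k := 0] \<in> unf_cols n k"
  by (auto simp: unf_cols_def tensor_idx_def nth_list_update)

lemma mode_rank_add_multiple_fiber:
  assumes c0: "c0 \<in> unf_cols n k"
    and T': "\<And>c. c \<in> unf_cols n k \<Longrightarrow> fiber n k T' c = fiber n k T c + w c \<cdot>\<^sub>v fiber n k T c0"
    and nz: "1 + w c0 \<noteq> 0"
  shows "mode_rank n k T' = mode_rank n k T"
proof -
  interpret vec_space "TYPE(real)" "n ! k" .
  have "set (sorted_list_of_set (unf_cols n k)) = unf_cols n k"
    using finite_unf_cols by simp
  then show ?thesis
    unfolding mode_rank_def mode_unfolding_def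
    by (intro rank_mat_of_cols_add_multiple[of _ _ c0 _ w]) (use c0 T' nz in auto)
qed

lemma mode_rank_eq_0_iff:
  assumes T: "tensor_on n T" and k: "k < length n"
  shows "mode_rank n k T = 0 \<longleftrightarrow> T = (\<lambda>_. 0)"
proof
  interpret vec_space "TYPE(real)" "n ! k" .
  let ?L = "sorted_list_of_set (unf_cols n k)"
  have L: "set ?L = unf_cols n k" using finite_unf_cols by simp
  show "T = (\<lambda>_. 0)" if "mode_rank n k T = 0"
  proof (rule ccontr)
    assume "T \<noteq> (\<lambda>_. 0)"
    then obtain x where x: "T x \<noteq> 0" by fastforce
    then have "x \<in> tensor_idx n" using T by (auto simp: tensor_on_def)
    then have c: "x[k := 0] \<in> unf_cols n k" and xk: "x ! k < n ! k"
      using k by (auto intro: tensor_idx_update_in_unf_cols simp: tensor_idx_def)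
    have "fiber n k T (x[k := 0]) $ (x ! k) = T x" using xk by (simp add: list_update_id)
    then have "fiber n k T (x[k := 0]) \<noteq> 0\<^sub>v (n ! k)"
      using x xk by (metis index_zero_vec(1))
    then have "0 < rank (mat_of_cols (n ! k) (map (fiber n k T) ?L))"
      by (intro rank_mat_of_cols_pos) (use L c in auto)
    with that show False unfolding mode_rank_def mode_unfolding_def by simp
  qed
  show "mode_rank n k T = 0" if "T = (\<lambda>_. 0)"
  proof -
    have "mat_of_cols (n ! k) (map (fiber n k T) ?L) = 0\<^sub>m (n ! k) (length ?L)"
      using that by (intro eq_matI) (auto simp: mat_of_cols_def fiber_def)
    then show ?thesis unfolding mode_rank_def mode_unfolding_def using rank_0I by simp
  qed
qed

definition outer_pair ::
    "nat list \<Rightarrow> nat \<Rightarrow> (nat \<Rightarrow> real) \<Rightarrow> nat \<Rightarrow> (nat \<Rightarrow> real) \<Rightarrow> nat list \<Rightarrow> real" where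
  "outer_pair n i p j q = (\<lambda>is. if is \<in> tensor_idx n then p (is ! i) * q (is ! j) else 0)"

lemma tensor_on_outer_pair: "tensor_on n (outer_pair n i p j q)"
  by (simp add: tensor_on_def outer_pair_def)

lemma outer_pair_swap: "outer_pair n i p j q = outer_pair n j q i p"
  by (simp add: outer_pair_def fun_eq_iff)

lemma mode_rank_add_outer_pair:
  assumes k: "k < length n" and l: "l \<noteq> k" and c0: "c0 \<in> unf_cols n k"
    and nz: "1 + t * q (c0 ! l) \<noteq> 0"
  shows "mode_rank n k (\<lambda>is. W is + t * outer_pair n k (\<lambda>x. W (c0[k := x])) l q is)
         = mode_rank n k W"
proof (rule mode_rank_add_multiple_fiber[where w = "\<lambda>c. t * q (c ! l)", OF c0 _ nz])
  fix c assume c: "c \<in> unf_cols n k"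
  show "fiber n k (\<lambda>is. W is + t * outer_pair n k (\<lambda>x. W (c0[k := x])) l q is) c
        = fiber n k W c + (t * q (c ! l)) \<cdot>\<^sub>v fiber n k W c0"
  proof (rule eq_vecI)
    fix x assume "x < dim_vec (fiber n k W c + (t * q (c ! l)) \<cdot>\<^sub>v fiber n k W c0)"
    then have x: "x < n ! k" by (simp add: fiber_def)
    then show "fiber n k (\<lambda>is. W is + t * outer_pair n k (\<lambda>x. W (c0[k := x])) l q is) c $ x
               = (fiber n k W c + (t * q (c ! l)) \<cdot>\<^sub>v fiber n k W c0) $ x"
      using unf_cols_update_in_tensor_idx[OF c k x] c k l
      by (simp add: outer_pair_def unf_cols_def fiber_def)
  qed (simp add: fiber_def)
qed

lemma tsum_list_update:
  assumes "i < length Ws"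
  shows "tsum (Ws[i := V]) = (\<lambda>is. tsum Ws is + (V is - (Ws ! i) is))"
proof
  fix x
  have "tsum (Ws[i := V]) x = (\<Sum>k<length Ws. (Ws ! k) x + (if k = i then V x - (Ws ! i) x else 0))"
    unfolding tsum_def by (intro sum.cong) (auto simp: nth_list_update)
  then show "tsum (Ws[i := V]) x = tsum Ws x + (V x - (Ws ! i) x)"
    using assms by (simp add: sum.distrib tsum_def)
qed

lemma tsum_single_component:
  assumes "ks < length Ws" and "\<forall>k<length Ws. k \<noteq> ks \<longrightarrow> Ws ! k = (\<lambda>_. 0)"
  shows "tsum Ws = Ws ! ks"
proof
  fix x
  have "tsum Ws x = (\<Sum>k<length Ws. if k = ks then (Ws ! ks) x else 0)"
    unfolding tsum_def using assms(2) by (intro sum.cong) auto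
  then show "tsum Ws x = (Ws ! ks) x" using assms(1) by simp
qed

lemma exists_small_nonzero: "\<exists>t::real. t \<noteq> 0 \<and> \<bar>t * a\<bar> < 1 \<and> \<bar>t * b\<bar> < 1"
proof (intro exI conjI)
  let ?t = "1 / (1 + \<bar>a\<bar> + \<bar>b\<bar>)"
  show "?t \<noteq> 0" by (simp add: add_pos_nonneg)
  show "\<bar>?t * a\<bar> < 1" "\<bar>?t * b\<bar> < 1" by (simp_all add: abs_mult field_simps)
qed

lemma two_nonzero_components_not_locally_identifiable:
  assumes len: "length Ws = length n" and on: "\<forall>k<length n. tensor_on n (Ws ! k)"
    and ij: "i < length n" "j < length n" "i \<noteq> j"
    and nz: "Ws ! i \<noteq> (\<lambda>_. 0)" "Ws ! j \<noteq> (\<lambda>_. 0)"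
  shows "\<not> locally_identifiable n Ws"
proof
  assume LI: "locally_identifiable n Ws"
  obtain xi xj where xi: "(Ws ! i) xi \<noteq> 0" and xj: "(Ws ! j) xj \<noteq> 0"
    using nz by fastforce
  then have idx: "xi \<in> tensor_idx n" "xj \<in> tensor_idx n"
    using on ij by (auto simp: tensor_on_def)
  define c0 where "c0 = xi[i := 0]"
  define d0 where "d0 = xj[j := 0]"
  define p where "p = (\<lambda>x. (Ws ! i) (c0[i := x]))"
  define q where "q = (\<lambda>y. (Ws ! j) (d0[j := y]))"
  define X where "X = outer_pair n i p j q"
  obtain t where t: "t \<noteq> 0" "\<bar>t * q (c0 ! j)\<bar> < 1" "\<bar>t * p (d0 ! i)\<bar> < 1"
    using exists_small_nonzero by blast
  define Vs where
    "Vs = Ws[i := (\<lambda>is. (Ws ! i) is + t * X is), j := (\<lambda>is. (Ws ! j) is + (- t) * X is)]"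
  have lenV: "length Vs = length n" using len by (simp add: Vs_def)
  have onV: "\<forall>k<length n. tensor_on n (Vs ! k)"
    using on len ij tensor_on_outer_pair[of n i p j q]
    by (auto simp: Vs_def X_def nth_list_update tensor_on_def)
  have sumV: "tsum Vs = tsum Ws"
    using ij len by (simp add: Vs_def tsum_list_update fun_eq_iff)
  have Vi: "Vs ! i = (\<lambda>is. (Ws ! i) is + t * outer_pair n i p j q is)"
    and Vj: "Vs ! j = (\<lambda>is. (Ws ! j) is + (- t) * outer_pair n j q i p is)"
    using ij len by (simp_all add: Vs_def X_def outer_pair_swap[of n i])
  have Vk: "Vs ! k = Ws ! k" if "k \<noteq> i" "k \<noteq> j" for k
    using that by (simp add: Vs_def)
  have c0: "c0 \<in> unf_cols n i" and d0: "d0 \<in> unf_cols n j"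
    unfolding c0_def d0_def using idx ij by (simp_all add: tensor_idx_update_in_unf_cols)
  have nz_i: "1 + t * q (c0 ! j) \<noteq> 0" and nz_j: "1 + (- t) * p (d0 ! i) \<noteq> 0"
    using t(2,3) by (auto simp: abs_if split: if_splits)
  have "mode_rank n i (Vs ! i) = mode_rank n i (Ws ! i)"
    unfolding Vi p_def using ij
    by (intro mode_rank_add_outer_pair[where q = q and l = j, OF _ _ c0 nz_i]) auto
  moreover have "mode_rank n j (Vs ! j) = mode_rank n j (Ws ! j)"
    unfolding Vj q_def using ij
    by (intro mode_rank_add_outer_pair[where q = p and l = i, OF _ _ d0 nz_j]) auto
  ultimately have "\<forall>k<length n. mode_rank n k (Vs ! k) = mode_rank n k (Ws ! k)"
    using Vk by metis
  then have "Vs = Ws"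
    using LI lenV onV sumV unfolding locally_identifiable_def by blast
  \<comment> \<open>but \<open>X\<close> does not vanish at the index combining \<open>xi\<close> in mode \<open>i\<close> with \<open>xj\<close> in mode \<open>j\<close>\<close>
  define e where "e = xi[j := xj ! j]"
  have "e \<in> tensor_idx n" using idx ij by (auto simp: e_def tensor_idx_def nth_list_update)
  moreover have "p (e ! i) = (Ws ! i) xi" "q (e ! j) = (Ws ! j) xj"
    using ij idx by (simp_all add: p_def q_def e_def c0_def d0_def tensor_idx_def)
  ultimately have "X e \<noteq> 0" using xi xj by (simp add: X_def outer_pair_def)
  then have "(Vs ! i) e \<noteq> (Ws ! i) e" using t(1) by (simp add: Vi X_def)
  with \<open>Vs = Ws\<close> show False by simp
qed

lemma single_component_locally_identifiable:
  assumes len: "length Ws = length n" and ks: "ks < length n"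
    and zero: "\<forall>k<length n. k \<noteq> ks \<longrightarrow> Ws ! k = (\<lambda>_. 0)"
  shows "locally_identifiable n Ws"
  unfolding locally_identifiable_def
proof (intro allI impI, elim conjE)
  fix Vs assume lenV: "length Vs = length n" and onV: "\<forall>k<length n. tensor_on n (Vs ! k)"
    and sumV: "tsum Vs = tsum Ws"
    and rankV: "\<forall>k<length n. mode_rank n k (Vs ! k) = mode_rank n k (Ws ! k)"
  have zeroV: "\<forall>k<length n. k \<noteq> ks \<longrightarrow> Vs ! k = (\<lambda>_. 0)"
  proof (intro allI impI)
    fix k assume k: "k < length n" "k \<noteq> ks"
    have "mode_rank n k (Ws ! k) = 0"
      using k zero mode_rank_eq_0_iff[of n "\<lambda>_. 0" k] by (simp add: tensor_on_def)
    then show "Vs ! k = (\<lambda>_. 0)" using k onV rankV mode_rank_eq_0_iff by metis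
  qed
  have "Vs ! ks = Ws ! ks"
    using tsum_single_component[of ks Vs] tsum_single_component[of ks Ws]
      ks len lenV sumV zero zeroV by simp
  then show "Vs = Ws"
  proof (intro nth_equalityI)
    fix k assume "k < length Vs"
    then show "Vs ! k = Ws ! k" using \<open>Vs ! ks = Ws ! ks\<close> lenV zero zeroV by (cases "k = ks") auto
  qed (simp add: len lenV)
qed

theorem theorem4:
  fixes n :: "nat list" and Ws :: "(nat list \<Rightarrow> real) list"
  assumes "length n \<ge> 1"
    and "length Ws = length n"
    and "\<forall>k<length n. tensor_on n (Ws ! k)"
  shows "locally_identifiable n Ws \<longleftrightarrow>
         (\<exists>ks<length n. Ws ! ks = tsum Ws \<and> (\<forall>k<length n. k \<noteq> ks \<longrightarrow> Ws ! k = (\<lambda>_. 0)))"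
proof
  assume "locally_identifiable n Ws"
  then have at_most_one: "Ws ! i = (\<lambda>_. 0) \<or> Ws ! j = (\<lambda>_. 0)"
    if "i < length n" "j < length n" "i \<noteq> j" for i j
    using two_nonzero_components_not_locally_identifiable[OF assms(2,3) that] by blast
  obtain ks where ks: "ks < length n" "\<forall>k<length n. k \<noteq> ks \<longrightarrow> Ws ! k = (\<lambda>_. 0)"
  proof (cases "\<exists>i<length n. Ws ! i \<noteq> (\<lambda>_. 0)")
    case True
    then show ?thesis using at_most_one that by metis
  next
    case False
    then show ?thesis using assms(1) by (intro that[of 0]) auto
  qed
  then show "\<exists>ks<length n. Ws ! ks = tsum Ws \<and> (\<forall>k<length n. k \<noteq> ks \<longrightarrow> Ws ! k = (\<lambda>_. 0))"
    using tsum_single_component[of ks Ws] assms(2) by auto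
next
  assume "\<exists>ks<length n. Ws ! ks = tsum Ws \<and> (\<forall>k<length n. k \<noteq> ks \<longrightarrow> Ws ! k = (\<lambda>_. 0))"
  then show "locally_identifiable n Ws"
    using single_component_locally_identifiable[OF assms(2)] by blast
qed

end
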